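(* Let $A>0$. There exist constants $R_A\ge1$ and $B_A$, depending only on $A$, such that for every Sawtooth model with $n\ge2$ upper particles for which $f_1,g_1,f_n,g_n$ each integrate to $1$ and are bounded by $A$ in sup norm, the map $$[0,1/R_A]\to(C([0,1]),\|\cdot\|_\infty),\qquad y\mapsto F_{X_I\mid X_F=y}$$ is $B_A$-Lipschitz.
   Context: A (type $--$) Sawtooth model with $n\ge1$ upper particles is specified by functions $f_1,g_1,\dots,f_n,g_n:[0,1]\to[0,\infty)$, each nondecreasing, $C^1$ and not identically zero. It is the probability space $[0,1]^{n+1}\times[0,1]^n$ with probability density at $(x_1,\dots,x_{n+1},y_1,\dots,y_n)$ equal to $\frac{1}{\mathcal V}\prod_{i=1}^n\mathbf 1_{\{x_i\le y_i\}}\mathbf 1_{\{x_{i+1}\le y_i\}}f_i(y_i-x_i)\,g_i(y_i-x_{i+1})$, $\mathcal V$ being the normalizing constant; lower particles $X_1,\dots,X_{n+1}$, upper particles $Y_1,\dots,Y_n$; $X_I:=X_1$, $X_F:=X_{n+1}$. $F_{X_I\mid X_F=y}(t)=\mathbb P(X_I\le t\mid X_F=y)$ is the conditional cumulative distribution function computed from the joint density. *)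

theory Defs
  imports "HOL-Analysis.Analysis"
begin

definition C1_on_unit :: "(real \<Rightarrow> real) \<Rightarrow> bool" where
  "C1_on_unit h \<longleftrightarrow> (\<exists>h'. continuous_on {0..1} h' \<and>
      (\<forall>x\<in>{0..1}. (h has_real_derivative h' x) (at x within {0..1})))"

definition sawtooth_weight_fun :: "(real \<Rightarrow> real) \<Rightarrow> bool" where
  "sawtooth_weight_fun h \<longleftrightarrow> (\<forall>x\<in>{0..1}. 0 \<le> h x) \<and> mono_on {0..1} h \<and>
      C1_on_unit h \<and> (\<exists>x\<in>{0..1}. h x \<noteq> 0)"

text \<open>Unnormalised joint density of the (--) Sawtooth model with n upper particles,
  lower particles x 1, ..., x (n+1), upper particles y 1, ..., y n.\<close>
definition sawtooth_density ::
  "nat \<Rightarrow> (nat \<Rightarrow> real \<Rightarrow> real) \<Rightarrow> (nat \<Rightarrow> real \<Rightarrow> real) \<Rightarrow>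
   (nat \<Rightarrow> real) \<Rightarrow> (nat \<Rightarrow> real) \<Rightarrow> real" where
  "sawtooth_density n f g x y =
     (\<Prod>i\<in>{1..n+1}. indicator {0..1} (x i)) * (\<Prod>i\<in>{1..n}. indicator {0..1} (y i)) *
     (\<Prod>i\<in>{1..n}. indicator {..y i} (x i) * indicator {..y i} (x (i+1)) *
                   f i (y i - x i) * g i (y i - x (i+1)))"

text \<open>Integral over all particles except X_F = x (n+1), which is fixed to s,
  of the density times a weight depending on X_I = x 1.\<close>
definition sawtooth_slice_integral ::
  "nat \<Rightarrow> (nat \<Rightarrow> real \<Rightarrow> real) \<Rightarrow> (nat \<Rightarrow> real \<Rightarrow> real) \<Rightarrow> (real \<Rightarrow> real) \<Rightarrow> real \<Rightarrow> real" where
  "sawtooth_slice_integral n f g \<phi> s =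
     (\<integral>xy. \<phi> (fst xy 1) * sawtooth_density n f g ((fst xy)(n+1 := s)) (snd xy)
        \<partial>(PiM {1..n} (\<lambda>_. lborel) \<Otimes>\<^sub>M PiM {1..n} (\<lambda>_. lborel)))"

text \<open>Conditional CDF of X_I given X_F = s, evaluated at t:
  ratio of the joint density integrated over {X_I \<le> t} to the marginal density of X_F at s
  (the normalising constant cancels). Division by 0 yields 0 by HOL convention.\<close>
definition cond_cdf_XI_given_XF ::
  "nat \<Rightarrow> (nat \<Rightarrow> real \<Rightarrow> real) \<Rightarrow> (nat \<Rightarrow> real \<Rightarrow> real) \<Rightarrow> real \<Rightarrow> real \<Rightarrow> real" where
  "cond_cdf_XI_given_XF n f g s t =
     sawtooth_slice_integral n f g (indicator {..t}) s / sawtooth_slice_integral n f g (\<lambda>_. 1) s"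

end

theory Submission
  imports Defs
begin

text \<open>Write n = k + 2. Conditioning on X_F = s, the parameter s enters the density only
  through f_n(y_n - x_n) g_n(y_n - s); integrating out y_n turns this into a kernel K(x_n, s)
  (end_mass) which is A^2-Lipschitz in s and, because f_n and g_n have mass 1 and are bounded
  by A, at least 1/(16A) whenever x_n, s \<le> 1/(4A). Integrating out y_1, ..., y_(n-1) leaves a
  weight W(x) (lower_weight) of the lower particles that is nonincreasing in x_n (through the
  factor g_(n-1)(y_(n-1) - x_n)), so a fraction 1/(4A) of its total mass T lies in
  x_n \<le> 1/(4A). Hence numerator and denominator of the conditional CDF move by at most
  A^2 T |s1 - s2| while the denominator stays above T/(64A^2), which gives the Lipschitz
  constant 128A^4. Continuity in t holds because the density is bounded.\<close>

lemma mono_unit_integral_lower_bound: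
  fixes H :: "real \<Rightarrow> real"
  assumes cont: "continuous_on {0..1} H" and mono: "mono_on {0..1} H"
    and bound: "\<And>u. u \<in> {0..1} \<Longrightarrow> H u \<le> A" and mass: "integral {0..1} H = 1"
    and v: "0 \<le> v" "v \<le> 1" "0 \<le> H v"
  shows "1 \<le> H v + (1 - v) * A"
proof -
  have int: "H integrable_on {a..b}" if "0 \<le> a" "b \<le> 1" for a b
    using that by (intro integrable_continuous_interval continuous_on_subset[OF cont]) auto
  have "1 = integral {0..v} H + integral {v..1} H"
    using Henstock_Kurzweil_Integration.integral_combine[of 0 v 1 H] v int mass by simp
  also have "integral {0..v} H \<le> integral {0..v} (\<lambda>_. H v)"
    using v by (intro integral_le int) (auto intro: mono_onD[OF mono])
  also have "\<dots> \<le> H v"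
    using v by (simp add: mult_left_le_one_le)
  also have "integral {v..1} H \<le> integral {v..1} (\<lambda>_. A)"
    using v by (intro integral_le int) (auto intro: bound)
  finally show ?thesis using v by simp
qed

lemma mono_unit_integral_half_near_one:
  fixes H :: "real \<Rightarrow> real"
  assumes "continuous_on {0..1} H" "mono_on {0..1} H"
    "\<And>u. u \<in> {0..1} \<Longrightarrow> 0 \<le> H u" "\<And>u. u \<in> {0..1} \<Longrightarrow> H u \<le> A" "integral {0..1} H = 1"
    and "1 \<le> A" "1 - 1 / (2 * A) \<le> v" "v \<le> 1"
  shows "1 / 2 \<le> H v"
proof -
  have v: "0 \<le> v" using assms(6,7) by (smt (verit) divide_le_eq_1_pos)
  have "1 \<le> H v + (1 - v) * A"
    using assms v by (intro mono_unit_integral_lower_bound) auto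
  moreover have "(1 - v) * A \<le> 1 / 2"
    using mult_right_mono[of "1 - v" "1 / (2 * A)" A] assms(6,7) by (simp add: field_simps)
  ultimately show ?thesis by linarith
qed

lemma nn_integral_decreasing_initial_segment:
  fixes w :: "real \<Rightarrow> ennreal" and e :: real
  assumes w_meas: "w \<in> borel_measurable borel" and w_zero: "\<And>a. a \<notin> {0..1} \<Longrightarrow> w a = 0"
    and w_antimono: "\<And>a a'. 0 \<le> a \<Longrightarrow> a \<le> a' \<Longrightarrow> w a' \<le> w a" and e: "0 < e" "e \<le> 1"
  shows "ennreal e * (\<integral>\<^sup>+a. w a \<partial>lborel) \<le> (\<integral>\<^sup>+a. w a * indicator {0..e} a \<partial>lborel)"
proof -
  define X where "X = (\<integral>\<^sup>+a. w a * indicator {0..e} a \<partial>lborel)"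
  define Y where "Y = (\<integral>\<^sup>+a. w a * indicator {e<..1} a \<partial>lborel)"
  have "(\<integral>\<^sup>+a. w a \<partial>lborel) = (\<integral>\<^sup>+a. w a * indicator {0..e} a + w a * indicator {e<..1} a \<partial>lborel)"
    using e by (intro nn_integral_cong) (auto simp: indicator_def w_zero)
  also have "\<dots> = X + Y"
    unfolding X_def Y_def using w_meas by (intro nn_integral_add) auto
  finally have total: "(\<integral>\<^sup>+a. w a \<partial>lborel) = X + Y" .
  \<comment> \<open>w e separates the two pieces: w \<ge> w e on [0,e] and w \<le> w e on (e,1].\<close>
  have "Y \<le> (\<integral>\<^sup>+a. w e * indicator {e<..1} a \<partial>lborel)"
    unfolding Y_def using e by (intro nn_integral_mono) (auto simp: indicator_def intro: w_antimono)
  also have "\<dots> = w e * ennreal (1 - e)"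
    using e by (subst nn_integral_cmult_indicator) auto
  finally have Y_le: "Y \<le> w e * ennreal (1 - e)" .
  have "w e * ennreal e = (\<integral>\<^sup>+a. w e * indicator {0..e} a \<partial>lborel)"
    using e by (subst nn_integral_cmult_indicator) auto
  also have "\<dots> \<le> X"
    unfolding X_def using e by (intro nn_integral_mono) (auto simp: indicator_def intro: w_antimono)
  finally have X_ge: "w e * ennreal e \<le> X" .
  have "ennreal e * Y \<le> ennreal (1 - e) * (w e * ennreal e)"
    using mult_left_mono[OF Y_le, of "ennreal e"] by (simp add: algebra_simps)
  also have "\<dots> \<le> ennreal (1 - e) * X"
    by (rule mult_left_mono[OF X_ge]) simp
  finally have "ennreal e * (X + Y) \<le> (ennreal e + ennreal (1 - e)) * X"
    by (simp add: algebra_simps add_left_mono)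
  also have "ennreal e + ennreal (1 - e) = 1"
    using e by (subst ennreal_plus[symmetric]) auto
  finally show ?thesis by (simp add: total X_def)
qed

lemma ratio_difference_bound:
  fixes n1 n2 d1 d2 t \<kappa> L :: real
  assumes "\<bar>n1 - n2\<bar> \<le> L * t" "\<bar>d1 - d2\<bar> \<le> L * t"
    and "0 \<le> n1" "n1 \<le> d1" "0 \<le> n2" "n2 \<le> d2" and "\<kappa> * t \<le> d1" "\<kappa> * t \<le> d2"
    and "0 < \<kappa>" "0 \<le> t" "0 \<le> L"
  shows "\<bar>n1 / d1 - n2 / d2\<bar> \<le> 2 * L / \<kappa>"
proof (cases "t = 0")
  case True
  then show ?thesis using assms by simp
next
  case False
  then have kt: "0 < \<kappa> * t"
    using assms by simp
  then have d: "0 < d1" "0 < d2"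
    using assms(7,8) by linarith+
  have "\<bar>n1 * d2 - n2 * d1\<bar> = \<bar>(n1 - n2) * d2 + n2 * (d2 - d1)\<bar>"
    by (simp add: algebra_simps)
  also have "\<dots> \<le> \<bar>n1 - n2\<bar> * d2 + n2 * \<bar>d2 - d1\<bar>"
    using abs_triangle_ineq[of "(n1 - n2) * d2" "n2 * (d2 - d1)"] d assms(5) by (simp add: abs_mult)
  also have "\<dots> \<le> L * t * d2 + d2 * (L * t)"
    using assms d by (intro add_mono mult_mono) (auto simp: abs_minus_commute)
  finally have "\<bar>n1 * d2 - n2 * d1\<bar> \<le> 2 * (L * t) * d2" by (simp add: algebra_simps)
  then have "\<bar>n1 / d1 - n2 / d2\<bar> \<le> 2 * (L * t) / d1"
    using d by (simp add: field_simps abs_div)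
  also have "\<dots> \<le> 2 * (L * t) / (\<kappa> * t)"
    using assms kt by (intro divide_left_mono) auto
  also have "\<dots> = 2 * L / \<kappa>"
    using False by simp
  finally show ?thesis .
qed

lemma enn2real_le_add_cmult:
  fixes X Y Z :: ennreal
  assumes "X \<le> Y + ennreal c * Z" "Y < top" "Z < top" "0 \<le> c"
  shows "enn2real X \<le> enn2real Y + c * enn2real Z"
proof -
  have fin: "ennreal c * Z < top" using assms by (simp add: ennreal_mult_less_top)
  have "enn2real X \<le> enn2real (Y + ennreal c * Z)"
    using assms fin by (intro enn2real_mono) auto
  also have "\<dots> = enn2real Y + c * enn2real Z"
    using assms fin by (simp add: enn2real_plus enn2real_mult)
  finally show ?thesis .
qed

lemma measurable_fst_component:
  "i \<in> I \<Longrightarrow> (\<lambda>xy. fst xy i) \<in> borel_measurable (PiM I (\<lambda>_. lborel) \<Otimes>\<^sub>M N)"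
  using measurable_component_singleton[of i I "\<lambda>_. lborel"]
  by (auto intro!: measurable_compose[OF measurable_fst] simp: measurable_lborel1)

lemma measurable_snd_component:
  "i \<in> I \<Longrightarrow> (\<lambda>xy. snd xy i) \<in> borel_measurable (N \<Otimes>\<^sub>M PiM I (\<lambda>_. lborel))"
  using measurable_component_singleton[of i I "\<lambda>_. lborel"]
  by (auto intro!: measurable_compose[OF measurable_snd] simp: measurable_lborel1)

lemma borel_measurable_continuous_on_diff:
  fixes u v :: "'a \<Rightarrow> real"
  shows "u \<in> borel_measurable M \<Longrightarrow> v \<in> borel_measurable M \<Longrightarrow> continuous_on UNIV h \<Longrightarrow>
    (\<lambda>x. h (v x - u x)) \<in> borel_measurable M"
  by (rule borel_measurable_continuous_on[of h "\<lambda>x. v x - u x"]) auto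

lemma borel_measurable_indicator_atMost:
  fixes u v :: "'a \<Rightarrow> real"
  assumes [measurable]: "u \<in> borel_measurable M" "v \<in> borel_measurable M"
  shows "(\<lambda>x. indicator {..v x} (u x) :: real) \<in> borel_measurable M"
proof -
  have "(\<lambda>x. if u x \<le> v x then 1 else 0 :: real) \<in> borel_measurable M" by measurable
  then show ?thesis by (simp add: indicator_def)
qed

lemma borel_measurable_indicator_unit:
  fixes u :: "'a \<Rightarrow> real"
  assumes [measurable]: "u \<in> borel_measurable M"
  shows "(\<lambda>x. indicator {0..1} (u x) :: real) \<in> borel_measurable M"
  by measurable

text \<open>The factors of the density that involve x_(n+1) = s, with a = x_n and b = y_n.\<close>
definition end_kernel :: "(real \<Rightarrow> real) \<Rightarrow> (real \<Rightarrow> real) \<Rightarrow> real \<Rightarrow> real \<Rightarrow> real \<Rightarrow> real" where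
  "end_kernel F G a b s =
     indicator {0..1} s * indicator {0..1} b * indicator {..b} a * indicator {..b} s *
     F (b - a) * G (b - s)"

locale end_weights =
  fixes F G :: "real \<Rightarrow> real" and A :: real
  assumes F_cont: "continuous_on UNIV F" and G_cont: "continuous_on UNIV G"
    and F_mono: "mono F" and G_mono: "mono G"
    and F_nonneg: "\<And>u. 0 \<le> F u" and G_nonneg: "\<And>u. 0 \<le> G u"
    and F_le: "\<And>u. F u \<le> A" and G_le: "\<And>u. G u \<le> A"
    and F_mass: "integral {0..1} F = 1" and G_mass: "integral {0..1} G = 1"
    and one_le_A: "1 \<le> A"
begin

abbreviation q :: "real \<Rightarrow> real \<Rightarrow> real \<Rightarrow> real" where
  "q \<equiv> end_kernel F G"

definition end_mass :: "real \<Rightarrow> real \<Rightarrow> real" where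
  "end_mass a s = (\<integral>b. q a b s \<partial>lborel)"

lemma G_borel [measurable]: "G \<in> borel_measurable borel"
  using G_cont by (rule borel_measurable_continuous_onI)

lemma end_kernel_nonneg: "0 \<le> q a b s"
  unfolding end_kernel_def using F_nonneg G_nonneg by (simp add: indicator_def)

lemma end_kernel_le: "q a b s \<le> A * A * indicator {0..1} b"
proof -
  have "q a b s \<le> indicator {0..1} b * (F (b - a) * G (b - s))"
    unfolding end_kernel_def using F_nonneg G_nonneg by (auto simp: indicator_def mult_le_one)
  also have "\<dots> \<le> indicator {0..1} b * (A * A)"
    using F_nonneg G_nonneg F_le G_le one_le_A by (intro mult_left_mono mult_mono) auto
  finally show ?thesis by (simp add: algebra_simps)
qed

lemma end_kernel_measurable: "(\<lambda>(a, b). q a b s) \<in> borel_measurable (lborel \<Otimes>\<^sub>M lborel)"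
proof -
  have "(\<lambda>(a, b). q a b s) = (\<lambda>ab. indicator {0..1} s * indicator {0..1} (snd ab) *
      indicator {..snd ab} (fst ab) * indicator {..snd ab} s * F (snd ab - fst ab) * G (snd ab - s))"
    by (auto simp: end_kernel_def)
  then show ?thesis
    by (simp only:) (intro borel_measurable_times borel_measurable_const
        borel_measurable_indicator_atMost borel_measurable_continuous_on_diff
        borel_measurable_indicator_unit F_cont G_cont measurable_fst'' measurable_snd''; simp)
qed

lemma integrable_end_kernel: "integrable lborel (\<lambda>b::real. q a b s)"
proof (rule Bochner_Integration.integrable_bound)
  show "integrable lborel (\<lambda>b::real. A * A * indicator {0..1} b :: real)"
    by (intro integrable_mult_right integrable_real_indicator) auto
  show "(\<lambda>b. q a b s) \<in> borel_measurable lborel"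
    using measurable_Pair2[OF end_kernel_measurable, of a] by simp
  show "AE b in lborel. norm (q a b s) \<le> norm (A * A * indicator {0..1} b :: real)"
    using end_kernel_nonneg end_kernel_le by (auto simp: indicator_def)
qed

lemma end_mass_nonneg: "0 \<le> end_mass a s"
  unfolding end_mass_def by (rule integral_nonneg_AE) (simp add: end_kernel_nonneg)

lemma F_half_near_one: "1 - 1 / (2 * A) \<le> v \<Longrightarrow> v \<le> 1 \<Longrightarrow> 1 / 2 \<le> F v"
  by (rule mono_unit_integral_half_near_one[OF continuous_on_subset[OF F_cont]
        mono_imp_mono_on[OF F_mono] F_nonneg F_le F_mass one_le_A]) auto

lemma G_half_near_one: "1 - 1 / (2 * A) \<le> v \<Longrightarrow> v \<le> 1 \<Longrightarrow> 1 / 2 \<le> G v"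
  by (rule mono_unit_integral_half_near_one[OF continuous_on_subset[OF G_cont]
        mono_imp_mono_on[OF G_mono] G_nonneg G_le G_mass one_le_A]) auto

text \<open>Near the diagonal both factors of the kernel exceed 1/2 on the top slab
  b \<in> [1 - 1/(4A), 1] of the integration range.\<close>
lemma end_mass_lower_bound:
  assumes a: "0 \<le> a" "a \<le> 1 / (4 * A)" and s: "0 \<le> s" "s \<le> 1 / (4 * A)"
  shows "1 / (16 * A) \<le> end_mass a s"
proof -
  define e where "e = 1 / (4 * A)"
  have e: "0 < e" "e \<le> 1 / 4" "2 * e = 1 / (2 * A)"
    using one_le_A by (auto simp: e_def field_simps)
  have le_e: "a \<le> e" "s \<le> e"
    using a s by (simp_all add: e_def)
  have slab: "1 / 4 * indicator {1 - e..1} b \<le> q a b s" for b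
  proof (cases "b \<in> {1 - e..1}")
    case True
    have "1 / 2 \<le> F (b - a)" "1 / 2 \<le> G (b - s)"
      using True a s e by (intro F_half_near_one G_half_near_one; simp)+
    then have "1 / 4 \<le> F (b - a) * G (b - s)"
      using mult_mono[of "1/2" "F (b - a)" "1/2" "G (b - s)"] F_nonneg by simp
    moreover have "q a b s = F (b - a) * G (b - s)"
      using True a s e le_e unfolding end_kernel_def by (auto simp: indicator_def)
    ultimately show ?thesis using True by simp
  qed (simp add: end_kernel_nonneg)
  have "1 / 4 * e = (\<integral>b. 1 / 4 * indicator {1 - e..1} b \<partial>lborel)"
    using e by simp
  also have "\<dots> \<le> end_mass a s"
    unfolding end_mass_def using e
    by (intro integral_mono integrable_end_kernel slab integrable_mult_right
        integrable_real_indicator) auto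
  finally show ?thesis using one_le_A by (simp add: e_def)
qed

definition G_pos :: "real \<Rightarrow> real" where
  "G_pos u = indicator {0..} u * G u"

lemma G_pos_mono: "u \<le> u' \<Longrightarrow> G_pos u \<le> G_pos u'"
  unfolding G_pos_def using G_nonneg monoD[OF G_mono, of u u'] by (auto simp: indicator_def)

lemma G_pos_borel [measurable]: "G_pos \<in> borel_measurable borel"
  unfolding G_pos_def by measurable

lemma end_kernel_eq_G_pos:
  "s \<in> {0..1} \<Longrightarrow> q a b s = (indicator {0..1} b * indicator {..b} a * F (b - a)) * G_pos (b - s)"
  unfolding end_kernel_def G_pos_def by (auto simp: indicator_def)

lemma integrable_G_pos_shift: "integrable lborel (\<lambda>b::real. indicator {0..1} b * G_pos (b - s) :: real)"
proof (rule Bochner_Integration.integrable_bound)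
  show "integrable lborel (\<lambda>b::real. A * indicator {0..1} b :: real)"
    by (intro integrable_mult_right integrable_real_indicator) auto
  show "(\<lambda>b. indicator {0..1} b * G_pos (b - s)) \<in> borel_measurable lborel" by measurable
  show "AE b in lborel. norm (indicator {0..1} b * G_pos (b - s) :: real)
      \<le> norm (A * indicator {0..1} b)"
    using G_le G_nonneg one_le_A by (auto simp: G_pos_def indicator_def)
qed

lemma integral_G_pos_shift:
  assumes "0 \<le> s" "s \<le> 1"
  shows "(\<integral>b. indicator {0..1} b * G_pos (b - s) \<partial>lborel) = integral {0..1 - s} G"
proof -
  have "(\<integral>b. indicator {0..1} b * G_pos (b - s) \<partial>lborel) =
      \<bar>1\<bar> *\<^sub>R (\<integral>x. indicator {0..1} (s + 1 * x) * G_pos (s + 1 * x - s) \<partial>lborel)"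
    by (rule lborel_integral_real_affine) simp
  also have "\<dots> = (\<integral>x. indicator {0..1 - s} x *\<^sub>R G x \<partial>lborel)"
    using assms by (simp, intro Bochner_Integration.integral_cong) (auto simp: G_pos_def indicator_def)
  also have "\<dots> = integral {0..1 - s} G"
    using set_borel_integral_eq_integral(2)[OF
        borel_integrable_atLeastAtMost'[OF continuous_on_subset[OF G_cont]]]
    unfolding set_lebesgue_integral_def by auto
  finally show ?thesis .
qed

lemma end_mass_antimono:
  assumes "0 \<le> s1" "s1 \<le> s2" "s2 \<le> 1"
  shows "end_mass a s2 \<le> end_mass a s1"
  unfolding end_mass_def
proof (rule integral_mono[OF integrable_end_kernel integrable_end_kernel])
  fix b
  show "q a b s2 \<le> q a b s1"
    using assms end_kernel_eq_G_pos[of s1 a b] end_kernel_eq_G_pos[of s2 a b]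
        G_pos_mono[of "b - s2" "b - s1"] F_nonneg[of "b - a"]
    by (auto intro!: mult_left_mono simp: indicator_def)
qed

text \<open>Decreasing s only adds the mass of G over [1 - s2, 1 - s1], weighted by at most A.\<close>
lemma end_mass_increment_le:
  assumes s: "0 \<le> s1" "s1 \<le> s2" "s2 \<le> 1"
  shows "end_mass a s1 \<le> end_mass a s2 + A * A * (s2 - s1)"
proof -
  define h where "h s b = indicator {0..1} b * G_pos (b - s)" for s b :: real
  have pointwise: "q a b s1 \<le> q a b s2 + (A * h s1 b - A * h s2 b)" for b
  proof -
    have F_part: "indicator {0..1} b * indicator {..b} a * F (b - a) \<le> A * indicator {0..1} b"
      using F_nonneg[of "b - a"] F_le[of "b - a"] one_le_A by (auto simp: indicator_def)
    have "q a b s1 - q a b s2 = (indicator {0..1} b * indicator {..b} a * F (b - a))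
        * (G_pos (b - s1) - G_pos (b - s2))"
      using end_kernel_eq_G_pos[of s1 a b] end_kernel_eq_G_pos[of s2 a b] s by (simp add: algebra_simps)
    also have "\<dots> \<le> (A * indicator {0..1} b) * (G_pos (b - s1) - G_pos (b - s2))"
      using G_pos_mono[of "b - s2" "b - s1"] s by (intro mult_right_mono[OF F_part]) simp
    finally show ?thesis by (simp add: h_def algebra_simps)
  qed
  have "end_mass a s1 \<le> (\<integral>b. q a b s2 + (A * h s1 b - A * h s2 b) \<partial>lborel)"
    unfolding end_mass_def h_def
    by (intro integral_mono integrable_end_kernel pointwise[unfolded h_def]
        Bochner_Integration.integrable_add Bochner_Integration.integrable_diff
        integrable_mult_right integrable_G_pos_shift)
  also have "\<dots> = end_mass a s2 + A * ((\<integral>b. h s1 b \<partial>lborel) - (\<integral>b. h s2 b \<partial>lborel))"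
    unfolding end_mass_def h_def
    by (simp add: integrable_end_kernel integrable_G_pos_shift algebra_simps)
  also have "(\<integral>b. h s1 b \<partial>lborel) - (\<integral>b. h s2 b \<partial>lborel) = integral {1 - s2..1 - s1} G"
  proof -
    have "integral {0..1 - s2} G + integral {1 - s2..1 - s1} G = integral {0..1 - s1} G"
      using s by (intro Henstock_Kurzweil_Integration.integral_combine integrable_continuous_interval
          continuous_on_subset[OF G_cont]) auto
    then show ?thesis
      using integral_G_pos_shift[of s1] integral_G_pos_shift[of s2] s by (simp add: h_def)
  qed
  also have "integral {1 - s2..1 - s1} G \<le> integral {1 - s2..1 - s1} (\<lambda>_. A)"
    by (intro integral_le integrable_continuous_interval continuous_on_subset[OF G_cont])
        (auto simp: G_le)
  also have "\<dots> = A * (s2 - s1)"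
    using s by simp
  finally show ?thesis
    using one_le_A by (simp add: algebra_simps mult_left_mono)
qed

lemma end_mass_lipschitz:
  assumes "s1 \<in> {0..1}" "s2 \<in> {0..1}"
  shows "\<bar>end_mass a s1 - end_mass a s2\<bar> \<le> A * A * \<bar>s1 - s2\<bar>"
  using assms end_mass_antimono[of s1 s2 a] end_mass_increment_le[of s1 s2 a]
    end_mass_antimono[of s2 s1 a] end_mass_increment_le[of s2 s1 a]
  by (cases "s1 \<le> s2") auto

end

definition head_density ::
  "nat \<Rightarrow> (nat \<Rightarrow> real \<Rightarrow> real) \<Rightarrow> (nat \<Rightarrow> real \<Rightarrow> real) \<Rightarrow> (nat \<Rightarrow> real) \<Rightarrow> (nat \<Rightarrow> real) \<Rightarrow> real" where
  "head_density k f g x y =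
     (\<Prod>i\<in>{1..Suc k}. indicator {0..1} (x i)) * (\<Prod>i\<in>{1..Suc k}. indicator {0..1} (y i)) *
     (\<Prod>i\<in>{1..Suc k}. indicator {..y i} (x i) * f i (y i - x i)) *
     (\<Prod>i\<in>{1..k}. indicator {..y i} (x (Suc i)) * g i (y i - x (Suc i)))"

definition link_weight :: "nat \<Rightarrow> (nat \<Rightarrow> real \<Rightarrow> real) \<Rightarrow> real \<Rightarrow> real \<Rightarrow> real" where
  "link_weight k g a b = indicator {0..1} a * indicator {..b} a * g (Suc k) (b - a)"

text \<open>The split is at x_n (n = k + 2): head_density involves only x_1 .. x_(n-1) and
  y_1 .. y_(n-1), and link_weight is the factor g_(n-1)(y_(n-1) - x_n).\<close>
lemma sawtooth_density_split:
  "sawtooth_density (Suc (Suc k)) f g (x(Suc (Suc k) + 1 := s)) y =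
   head_density k f g x y * link_weight k g (x (Suc (Suc k))) (y (Suc k)) *
   end_kernel (f (Suc (Suc k))) (g (Suc (Suc k))) (x (Suc (Suc k))) (y (Suc (Suc k))) s"
proof -
  let ?n = "Suc (Suc k)" and ?m = "Suc k"
  let ?x = "x(?n + 1 := s)"
  let ?F = "\<lambda>i. indicator {..y i} (?x i) * indicator {..y i} (?x (i + 1)) *
    f i (y i - ?x i) * g i (y i - ?x (i + 1))"
  have lower: "(\<Prod>i\<in>{1..?n + 1}. indicator {0..1} (?x i)) =
      (\<Prod>i\<in>{1..?m}. indicator {0..1} (x i)) * indicator {0..1} (x ?n) * indicator {0..1} s"
  proof -
    have "(\<Prod>i\<in>{1..?m}. indicator {0..1} (?x i)) = (\<Prod>i\<in>{1..?m}. indicator {0..1} (x i) :: real)"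
      by (rule prod.cong) auto
    then show ?thesis by (simp add: prod.cl_ivl_Suc)
  qed
  have upper: "(\<Prod>i\<in>{1..?n}. indicator {0..1} (y i)) =
      (\<Prod>i\<in>{1..?m}. indicator {0..1} (y i)) * indicator {0..1} (y ?n)"
    by (simp add: prod.cl_ivl_Suc)
  have "(\<Prod>i\<in>{1..?m}. ?F i) = (\<Prod>i\<in>{1..?m}. (indicator {..y i} (x i) * f i (y i - x i)) *
      (indicator {..y i} (x (Suc i)) * g i (y i - x (Suc i))))"
    by (rule prod.cong) (auto simp: algebra_simps)
  then have edges: "(\<Prod>i\<in>{1..?n}. ?F i) =
      (\<Prod>i\<in>{1..?m}. indicator {..y i} (x i) * f i (y i - x i)) *
      (\<Prod>i\<in>{1..k}. indicator {..y i} (x (Suc i)) * g i (y i - x (Suc i))) *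
      (indicator {..y ?m} (x ?n) * g ?m (y ?m - x ?n)) * ?F ?n"
    by (simp add: prod.cl_ivl_Suc prod.distrib)
  show ?thesis
    unfolding sawtooth_density_def lower upper edges head_density_def link_weight_def end_kernel_def
    by (simp add: algebra_simps)
qed

lemma head_density_measurable:
  assumes "\<And>i. continuous_on UNIV (f i)" "\<And>i. continuous_on UNIV (g i)"
    and "{1..Suc k} \<subseteq> I" "{1..Suc k} \<subseteq> I'"
  shows "(\<lambda>xy. head_density k f g (fst xy) (snd xy)) \<in>
    borel_measurable (PiM I (\<lambda>_. lborel) \<Otimes>\<^sub>M PiM I' (\<lambda>_. lborel))"
proof -
  have component: "(\<lambda>xy. fst xy i) \<in> borel_measurable (PiM I (\<lambda>_. lborel) \<Otimes>\<^sub>M PiM I' (\<lambda>_. lborel))"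
    "(\<lambda>xy. snd xy i) \<in> borel_measurable (PiM I (\<lambda>_. lborel) \<Otimes>\<^sub>M PiM I' (\<lambda>_. lborel))"
    if "i \<in> {1..Suc k}" for i
    using that assms(3,4) by (auto intro!: measurable_fst_component measurable_snd_component)
  have shift: "(\<lambda>xy. fst xy (Suc i)) \<in> borel_measurable (PiM I (\<lambda>_. lborel) \<Otimes>\<^sub>M PiM I' (\<lambda>_. lborel))"
    if "i \<in> {1..k}" for i
    using that assms(3) by (auto intro!: measurable_fst_component)
  have "i \<in> {1..k} \<Longrightarrow> i \<in> {1..Suc k}" for i by auto
  then show ?thesis
    unfolding head_density_def
    by (intro borel_measurable_times borel_measurable_prod;
        auto intro!: borel_measurable_indicator_unit borel_measurable_indicator_atMost
          borel_measurable_continuous_on_diff component shift assms(1,2))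
qed

lemma head_density_update_lower: "Suc k < j \<Longrightarrow> head_density k f g (x(j := a)) y = head_density k f g x y"
  unfolding head_density_def by (intro arg_cong2[where f = "(*)"] prod.cong) auto

lemma head_density_update_upper: "Suc k < j \<Longrightarrow> head_density k f g x (y(j := b)) = head_density k f g x y"
  unfolding head_density_def by (intro arg_cong2[where f = "(*)"] prod.cong) auto

lemma sawtooth_density_nonneg:
  "(\<And>i u. 0 \<le> f i u) \<Longrightarrow> (\<And>i u. 0 \<le> g i u) \<Longrightarrow> 0 \<le> sawtooth_density n f g x y"
  unfolding sawtooth_density_def by (intro mult_nonneg_nonneg prod_nonneg) (auto simp: indicator_def)

lemma sawtooth_density_le:
  assumes f_nonneg: "\<And>i u. 0 \<le> f i u" and g_nonneg: "\<And>i u. 0 \<le> g i u"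
    and f_le: "\<And>i u. f i u \<le> f i 1" and g_le: "\<And>i u. g i u \<le> g i 1"
  shows "sawtooth_density n f g x y \<le>
    (\<Prod>i\<in>{1..n}. f i 1 * g i 1)
        * ((\<Prod>i\<in>{1..n}. indicator {0..1} (x i)) * (\<Prod>i\<in>{1..n}. indicator {0..1} (y i)))"
proof -
  have lower: "(\<Prod>i\<in>{1..n + 1}. indicator {0..1} (x i) :: real) \<le> (\<Prod>i\<in>{1..n}. indicator {0..1} (x i))"
    by (auto simp: prod.cl_ivl_Suc indicator_def intro!: prod_nonneg)
  let ?E = "\<lambda>i. indicator {..y i} (x i) * indicator {..y i} (x (i + 1)) * f i (y i - x i)
      * g i (y i - x (i + 1))"
  have E: "0 \<le> ?E i" "?E i \<le> f i 1 * g i 1" for i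
    using f_nonneg[of i] g_nonneg[of i] f_le[of i] g_le[of i]
    by (auto simp: indicator_def intro: mult_mono)
  have "sawtooth_density n f g x y \<le>
      (\<Prod>i\<in>{1..n}. indicator {0..1} (x i)) * (\<Prod>i\<in>{1..n}. indicator {0..1} (y i))
          * (\<Prod>i\<in>{1..n}. f i 1 * g i 1)"
    unfolding sawtooth_density_def
    by (intro mult_mono lower prod_mono E order_refl mult_nonneg_nonneg prod_nonneg conjI)
      (auto simp: indicator_def)
  then show ?thesis by (simp add: algebra_simps)
qed

interpretation lborel_product: product_sigma_finite "\<lambda>_::nat. lborel :: real measure"
  by standard

locale regular_sawtooth =
  fixes k :: nat and f g :: "nat \<Rightarrow> real \<Rightarrow> real" and A :: real
  assumes f_cont: "\<And>i. continuous_on UNIV (f i)" and g_cont: "\<And>i. continuous_on UNIV (g i)"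
    and f_nonneg: "\<And>i u. 0 \<le> f i u" and g_nonneg: "\<And>i u. 0 \<le> g i u"
    and f_mono: "\<And>i. mono (f i)" and g_mono: "\<And>i. mono (g i)"
    and f_le_f1: "\<And>i u. f i u \<le> f i 1" and g_le_g1: "\<And>i u. g i u \<le> g i 1"
    and f_last_le: "\<And>u. f (Suc (Suc k)) u \<le> A" and g_last_le: "\<And>u. g (Suc (Suc k)) u \<le> A"
    and f_last_mass: "integral {0..1} (f (Suc (Suc k))) = 1"
    and g_last_mass: "integral {0..1} (g (Suc (Suc k))) = 1"
    and one_le_A: "1 \<le> A"

sublocale regular_sawtooth \<subseteq> end_weights "f (Suc (Suc k))" "g (Suc (Suc k))" A
  by standard (auto simp: f_cont g_cont f_nonneg g_nonneg f_mono g_mono f_last_le g_last_le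
      f_last_mass g_last_mass one_le_A)

context regular_sawtooth
begin

abbreviation n :: nat where "n \<equiv> Suc (Suc k)"

abbreviation M :: "(nat \<Rightarrow> real) measure" where "M \<equiv> PiM {1..n} (\<lambda>_. lborel)"

abbreviation M_head :: "(nat \<Rightarrow> real) measure" where "M_head \<equiv> PiM {1..Suc k} (\<lambda>_. lborel)"

definition slice :: "(real \<Rightarrow> real) \<Rightarrow> real \<Rightarrow> ennreal" where
  "slice \<phi> s = (\<integral>\<^sup>+xy. ennreal
      (\<phi> (fst xy 1) * sawtooth_density n f g ((fst xy)(n + 1 := s)) (snd xy)) \<partial>(M \<Otimes>\<^sub>M M))"

definition lower_weight :: "(real \<Rightarrow> real) \<Rightarrow> (nat \<Rightarrow> real) \<Rightarrow> ennreal" where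
  "lower_weight \<phi> x =
     (\<integral>\<^sup>+y. ennreal (\<phi> (x 1) * head_density k f g x y * link_weight k g (x n) (y (Suc k))) \<partial>M_head)"

definition total_weight :: ennreal where
  "total_weight = (\<integral>\<^sup>+x. lower_weight (\<lambda>_. 1) x \<partial>M)"

definition density_bound :: real where
  "density_bound = (\<Prod>i\<in>{1..n}. f i 1 * g i 1)"

lemma head_density_nonneg: "0 \<le> head_density k f g x y"
  unfolding head_density_def using f_nonneg g_nonneg
  by (intro mult_nonneg_nonneg prod_nonneg) (auto simp: indicator_def)

lemma link_weight_nonneg: "0 \<le> link_weight k g a b"
  unfolding link_weight_def using g_nonneg by (auto simp: indicator_def)

lemma link_weight_antimono: "0 \<le> a \<Longrightarrow> a \<le> a' \<Longrightarrow> link_weight k g a' b \<le> link_weight k g a b"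
  unfolding link_weight_def using g_nonneg monoD[OF g_mono, of "b - a'" "b - a" "Suc k"]
  by (auto simp: indicator_def)

lemma density_bound_nonneg: "0 \<le> density_bound"
  unfolding density_bound_def using f_nonneg g_nonneg by (intro prod_nonneg) auto

lemma link_weight_measurable:
  "u \<in> borel_measurable N \<Longrightarrow> v \<in> borel_measurable N \<Longrightarrow> (\<lambda>x. link_weight k g (u x) (v x)) \<in>
      borel_measurable N"
  unfolding link_weight_def
  by (intro borel_measurable_times borel_measurable_indicator_unit borel_measurable_indicator_atMost
      borel_measurable_continuous_on_diff g_cont)

lemma end_kernel_comp_measurable:
  "u \<in> borel_measurable N \<Longrightarrow> v \<in> borel_measurable N \<Longrightarrow> (\<lambda>x. q (u x) (v x) s) \<in> borel_measurable N"
  unfolding end_kernel_def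
  by (intro borel_measurable_times borel_measurable_indicator_unit borel_measurable_indicator_atMost
      borel_measurable_continuous_on_diff f_cont g_cont borel_measurable_const)
    (auto intro!: borel_measurable_continuous_on[of _ "\<lambda>x. v x - s"] g_cont)

lemma lower_integrand_measurable:
  assumes "\<phi> \<in> borel_measurable borel"
  shows "(\<lambda>xy. \<phi> (fst xy 1) * head_density k f g (fst xy) (snd xy)
      * link_weight k g (fst xy n) (snd xy (Suc k)))
     \<in> borel_measurable (M \<Otimes>\<^sub>M M_head)"
  by (intro borel_measurable_times head_density_measurable f_cont g_cont link_weight_measurable
      measurable_fst_component measurable_snd_component measurable_compose[OF _ assms]) auto

lemma slice_integrand_measurable:
  assumes "\<phi> \<in> borel_measurable borel"
  shows "(\<lambda>xy. \<phi> (fst xy 1) * sawtooth_density n f g ((fst xy)(n + 1 := s)) (snd xy)) \<in>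
      borel_measurable (M \<Otimes>\<^sub>M M)"
  unfolding sawtooth_density_split mult.assoc[symmetric]
  by (intro borel_measurable_times head_density_measurable f_cont g_cont link_weight_measurable
      end_kernel_comp_measurable measurable_fst_component measurable_snd_component
          measurable_compose[OF _ assms]) auto

lemma lower_weight_measurable:
  assumes "\<phi> \<in> borel_measurable borel"
  shows "lower_weight \<phi> \<in> borel_measurable M"
  unfolding lower_weight_def
  using measurable_compose[OF lower_integrand_measurable[OF assms] measurable_ennreal]
  by (intro sigma_finite_measure.borel_measurable_nn_integral lborel_product.sigma_finite)
    (simp_all add: split_beta')

lemma end_mass_measurable: "(\<lambda>x. ennreal (end_mass (x n) s)) \<in> borel_measurable M"
proof -
  have "(\<lambda>a. end_mass a s) \<in> borel_measurable lborel"
    unfolding end_mass_def using end_kernel_measurable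
    by (intro lborel.borel_measurable_lebesgue_integral) (simp add: split_beta')
  from measurable_compose[OF this measurable_ennreal]
  have "(\<lambda>a. ennreal (end_mass a s)) \<in> borel_measurable lborel" by simp
  from measurable_compose[OF measurable_component_singleton[of n "{1..n}" "\<lambda>_. lborel"] this]
  show ?thesis by simp
qed

text \<open>Integrating out y_n turns the last two factors into the end mass.\<close>
lemma slice_eq_lower_weight:
  assumes \<phi>_meas: "\<phi> \<in> borel_measurable borel" and \<phi>_nonneg: "\<And>u. 0 \<le> \<phi> u"
  shows "slice \<phi> s = (\<integral>\<^sup>+x. lower_weight \<phi> x * ennreal (end_mass (x n) s) \<partial>M)"
proof -
  define h where "h x y = \<phi> (x 1) * head_density k f g x y * link_weight k g (x n) (y (Suc k))
      * q (x n) (y n) s"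
    for x y
  have h_meas: "(\<lambda>xy. ennreal (h (fst xy) (snd xy))) \<in> borel_measurable (M \<Otimes>\<^sub>M M)"
    using measurable_compose[OF slice_integrand_measurable[OF \<phi>_meas] measurable_ennreal]
    unfolding h_def sawtooth_density_split by (simp add: mult.assoc)
  have ins: "{1..n} = insert n {1..Suc k}" by auto
  have "slice \<phi> s = (\<integral>\<^sup>+xy. ennreal (h (fst xy) (snd xy)) \<partial>(M \<Otimes>\<^sub>M M))"
    unfolding slice_def sawtooth_density_split h_def by (simp add: mult.assoc)
  also have "\<dots> = (\<integral>\<^sup>+x. \<integral>\<^sup>+y. ennreal (h x y) \<partial>M \<partial>M)"
    using sigma_finite_measure.nn_integral_fst[OF lborel_product.sigma_finite h_meas] by simp
  also have "\<dots> = (\<integral>\<^sup>+x. lower_weight \<phi> x * ennreal (end_mass (x n) s) \<partial>M)"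
  proof (rule nn_integral_cong)
    fix x assume x: "x \<in> space M"
    have "(\<integral>\<^sup>+y. ennreal (h x y) \<partial>M) = (\<integral>\<^sup>+y'. \<integral>\<^sup>+b. ennreal (h x (y'(n := b))) \<partial>lborel \<partial>M_head)"
      using lborel_product.product_nn_integral_insert[of "{1..Suc k}" n "\<lambda>y. ennreal (h x y)"]
        measurable_Pair2[OF h_meas x]
      unfolding ins by simp
    also have "\<dots> = (\<integral>\<^sup>+y'. ennreal
        (\<phi> (x 1) * head_density k f g x y' * link_weight k g (x n) (y' (Suc k))) *
        ennreal (end_mass (x n) s) \<partial>M_head)"
    proof (rule nn_integral_cong)
      fix y'
      define c where "c = \<phi> (x 1) * head_density k f g x y' * link_weight k g (x n) (y' (Suc k))"
      have "(\<integral>\<^sup>+b. ennreal (h x (y'(n := b))) \<partial>lborel)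
          = (\<integral>\<^sup>+b. ennreal c * ennreal (q (x n) b s) \<partial>lborel)"
        unfolding h_def c_def using head_density_update_upper[of k n f g x y'] \<phi>_nonneg
        by (intro nn_integral_cong) (simp add: ennreal_mult'' end_kernel_nonneg)
      also have "\<dots> = ennreal c * (\<integral>\<^sup>+b. ennreal (q (x n) b s) \<partial>lborel)"
        using measurable_Pair2[OF end_kernel_measurable, of "x n" s]
        by (intro nn_integral_cmult measurable_compose[OF _ measurable_ennreal]) simp
      also have "(\<integral>\<^sup>+b. ennreal (q (x n) b s) \<partial>lborel) = ennreal (end_mass (x n) s)"
        unfolding end_mass_def by (rule nn_integral_eq_integral[OF integrable_end_kernel])
            (simp add: end_kernel_nonneg)
      finally show "(\<integral>\<^sup>+b. ennreal (h x (y'(n := b))) \<partial>lborel) = ennreal c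
          * ennreal (end_mass (x n) s)" .
    qed
    also have "\<dots> = lower_weight \<phi> x * ennreal (end_mass (x n) s)"
      unfolding lower_weight_def
      using measurable_Pair2[OF
          measurable_compose[OF lower_integrand_measurable[OF \<phi>_meas] measurable_ennreal] x]
      by (intro nn_integral_multc) simp
    finally show "(\<integral>\<^sup>+y. ennreal (h x y) \<partial>M) = lower_weight \<phi> x * ennreal (end_mass (x n) s)" .
  qed
  finally show ?thesis .
qed

lemma lower_weight_indicator_measurable:
  "(\<lambda>x. lower_weight (\<lambda>_. 1) x * indicator {0..e} (x n)) \<in> borel_measurable M"
proof -
  have "(\<lambda>x. x n) \<in> borel_measurable M" by simp
  then have "(\<lambda>x. indicator {0..e} (x n) :: ennreal) \<in> borel_measurable M" by measurable
  then show ?thesis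
    using lower_weight_measurable[of "\<lambda>_. 1"] by (intro borel_measurable_times_ennreal) simp_all
qed

text \<open>Of the lower particles only x_n is constrained by g_(n-1) (y_(n-1) - x_n), which is
  nonincreasing in x_n; so the weight of a configuration decreases when x_n moves right.\<close>
lemma lower_weight_section_near_zero:
  assumes x': "x' \<in> space M_head" and e: "0 < e" "e \<le> 1"
  shows "(\<integral>\<^sup>+a. ennreal e * lower_weight (\<lambda>_. 1) (x'(n := a)) \<partial>lborel) \<le>
    (\<integral>\<^sup>+a. lower_weight (\<lambda>_. 1) (x'(n := a)) * indicator {0..e} a \<partial>lborel)"
proof -
  define w where "w a = lower_weight (\<lambda>_. 1) (x'(n := a))" for a
  have w_meas: "w \<in> borel_measurable borel"
  proof -
    have "(\<lambda>a. x'(n := a)) \<in> measurable lborel M"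
      using measurable_component_update[OF x', of n] by (simp add: insert_absorb atLeastAtMostSuc_conv)
    from measurable_compose[OF this lower_weight_measurable[of "\<lambda>_. 1"]] show ?thesis
      unfolding w_def by simp
  qed
  have w_eq: "w a = (\<integral>\<^sup>+y. ennreal (head_density k f g x' y * link_weight k g a (y (Suc k)))
      \<partial>M_head)" for a
    unfolding w_def lower_weight_def using head_density_update_lower[of k n f g x' a] by simp
  have "(\<integral>\<^sup>+a. ennreal e * w a \<partial>lborel) = ennreal e * (\<integral>\<^sup>+a. w a \<partial>lborel)"
    using w_meas by (intro nn_integral_cmult) simp
  also have "\<dots> \<le> (\<integral>\<^sup>+a. w a * indicator {0..e} a \<partial>lborel)"
  proof (rule nn_integral_decreasing_initial_segment[OF w_meas _ _ e])
    show "w a = 0" if "a \<notin> {0..1}" for a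
      using that unfolding w_eq link_weight_def by simp
    show "w a' \<le> w a" if "0 \<le> a" "a \<le> a'" for a a'
      using that unfolding w_eq
      by (intro nn_integral_mono ennreal_leI mult_left_mono link_weight_antimono head_density_nonneg)
  qed
  finally show ?thesis
    unfolding w_def .
qed

lemma total_weight_near_zero:
  assumes e: "0 < e" "e \<le> 1"
  shows "ennreal e * total_weight \<le> (\<integral>\<^sup>+x. lower_weight (\<lambda>_. 1) x * indicator {0..e} (x n) \<partial>M)"
proof -
  let ?W = "lower_weight (\<lambda>_. 1)"
  have ins: "{1..n} = insert n {1..Suc k}" by auto
  have W_meas: "?W \<in> borel_measurable M"
    by (rule lower_weight_measurable) simp
  have "ennreal e * total_weight = (\<integral>\<^sup>+x. ennreal e * ?W x \<partial>M)"
    unfolding total_weight_def by (rule nn_integral_cmult[OF W_meas, symmetric])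
  also have "\<dots> = (\<integral>\<^sup>+x'. \<integral>\<^sup>+a. ennreal e * ?W (x'(n := a)) \<partial>lborel \<partial>M_head)"
    using lborel_product.product_nn_integral_insert[of "{1..Suc k}" n "\<lambda>x. ennreal e * ?W x"] W_meas
    unfolding ins by simp
  also have "\<dots> \<le> (\<integral>\<^sup>+x'. \<integral>\<^sup>+a. ?W (x'(n := a)) * indicator {0..e} a \<partial>lborel \<partial>M_head)"
    by (intro nn_integral_mono lower_weight_section_near_zero e) simp
  also have "\<dots> = (\<integral>\<^sup>+x. ?W x * indicator {0..e} (x n) \<partial>M)"
    using lborel_product.product_nn_integral_insert[of "{1..Suc k}" n "\<lambda>x. ?W x
        * indicator {0..e} (x n)"]
      lower_weight_indicator_measurable
    unfolding ins by simp
  finally show ?thesis .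
qed

lemma slice_lower_bound:
  assumes s: "0 \<le> s" "s \<le> 1 / (4 * A)"
  shows "ennreal (1 / (64 * A\<^sup>2)) * total_weight \<le> slice (\<lambda>_. 1) s"
proof -
  let ?W = "lower_weight (\<lambda>_. 1)"
  define e where "e = 1 / (4 * A)"
  have e: "0 < e" "e \<le> 1" using one_le_A by (auto simp: e_def field_simps)
  have "ennreal (1 / (64 * A\<^sup>2)) = ennreal (1 / (16 * A)) * ennreal e"
    using one_le_A by (subst ennreal_mult[symmetric]) (auto simp: e_def power2_eq_square)
  then have "ennreal (1 / (64 * A\<^sup>2)) * total_weight = ennreal (1 / (16 * A))
      * (ennreal e * total_weight)"
    by (simp add: mult.assoc)
  also have "\<dots> \<le> ennreal (1 / (16 * A)) * (\<integral>\<^sup>+x. ?W x * indicator {0..e} (x n) \<partial>M)"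
    by (intro mult_left_mono total_weight_near_zero e) simp
  also have "\<dots> = (\<integral>\<^sup>+x. ennreal (1 / (16 * A)) * (?W x * indicator {0..e} (x n)) \<partial>M)"
    using lower_weight_indicator_measurable by (rule nn_integral_cmult[symmetric])
  also have "\<dots> \<le> (\<integral>\<^sup>+x. ?W x * ennreal (end_mass (x n) s) \<partial>M)"
  proof (rule nn_integral_mono)
    fix x :: "nat \<Rightarrow> real"
    show "ennreal (1 / (16 * A)) * (?W x * indicator {0..e} (x n)) \<le> ?W x * ennreal (end_mass (x n) s)"
    proof (cases "x n \<in> {0..e}")
      case True
      then have "ennreal (1 / (16 * A)) \<le> ennreal (end_mass (x n) s)"
        using s by (intro ennreal_leI end_mass_lower_bound) (auto simp: e_def)
      then show ?thesis using True by (simp add: mult_left_mono mult.commute)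
    qed simp
  qed
  also have "\<dots> = slice (\<lambda>_. 1) s"
    by (rule slice_eq_lower_weight[symmetric]) auto
  finally show ?thesis .
qed

lemma slice_le_lipschitz:
  assumes \<phi>_meas: "\<phi> \<in> borel_measurable borel" and \<phi>_range: "\<And>u. 0 \<le> \<phi> u" "\<And>u. \<phi> u \<le> 1"
    and s: "s1 \<in> {0..1}" "s2 \<in> {0..1}"
  shows "slice \<phi> s1 \<le> slice \<phi> s2 + ennreal (A * A * \<bar>s1 - s2\<bar>) * total_weight"
proof -
  let ?L = "ennreal (A * A * \<bar>s1 - s2\<bar>)"
  have "slice \<phi> s1 = (\<integral>\<^sup>+x. lower_weight \<phi> x * ennreal (end_mass (x n) s1) \<partial>M)"
    by (rule slice_eq_lower_weight[OF \<phi>_meas \<phi>_range(1)])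
  also have "\<dots> \<le>
      (\<integral>\<^sup>+x. lower_weight \<phi> x * ennreal (end_mass (x n) s2) + ?L * lower_weight (\<lambda>_. 1) x \<partial>M)"
  proof (rule nn_integral_mono)
    fix x :: "nat \<Rightarrow> real"
    have "ennreal (end_mass (x n) s1) \<le> ennreal (end_mass (x n) s2 + A * A * \<bar>s1 - s2\<bar>)"
      using end_mass_lipschitz[OF s, of "x n"] by (intro ennreal_leI) linarith
    also have "\<dots> = ennreal (end_mass (x n) s2) + ?L"
      using end_mass_nonneg one_le_A by (intro ennreal_plus) auto
    finally have "lower_weight \<phi> x * ennreal (end_mass (x n) s1) \<le>
        lower_weight \<phi> x * (ennreal (end_mass (x n) s2) + ?L)"
      by (rule mult_left_mono) simp
    also have "\<dots> = lower_weight \<phi> x * ennreal (end_mass (x n) s2) + ?L * lower_weight \<phi> x"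
      by (simp add: algebra_simps)
    also have "\<dots> \<le> lower_weight \<phi> x * ennreal (end_mass (x n) s2) + ?L * lower_weight (\<lambda>_. 1) x"
      unfolding lower_weight_def using head_density_nonneg link_weight_nonneg \<phi>_range(2)
      by (intro add_left_mono mult_left_mono nn_integral_mono ennreal_leI mult_right_mono) auto
    finally show "lower_weight \<phi> x * ennreal (end_mass (x n) s1) \<le>
        lower_weight \<phi> x * ennreal (end_mass (x n) s2) + ?L * lower_weight (\<lambda>_. 1) x" .
  qed
  also have "\<dots> = slice \<phi> s2 + ?L * total_weight"
    using lower_weight_measurable[OF \<phi>_meas] lower_weight_measurable[of "\<lambda>_. 1"] end_mass_measurable
    by (simp add: nn_integral_add borel_measurable_times_ennreal nn_integral_cmult total_weight_def
        slice_eq_lower_weight[OF \<phi>_meas \<phi>_range(1)])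
  finally show ?thesis .
qed

definition unit_cube_indicator :: "(nat \<Rightarrow> real) \<Rightarrow> real" where
  "unit_cube_indicator z = (\<Prod>i\<in>{1..n}. indicator {0..1} (z i))"

lemma unit_cube_indicator_nonneg: "0 \<le> unit_cube_indicator z"
  unfolding unit_cube_indicator_def by (intro prod_nonneg) (auto simp: indicator_def)

lemma unit_cube_indicator_measurable: "unit_cube_indicator \<in> borel_measurable M"
  unfolding unit_cube_indicator_def
  by (intro borel_measurable_prod borel_measurable_indicator_unit) simp

lemma nn_integral_first_component:
  assumes \<phi>_meas: "\<phi> \<in> borel_measurable borel" and \<phi>_nonneg: "\<And>u. 0 \<le> \<phi> u"
  shows "(\<integral>\<^sup>+x. ennreal (\<phi> (x 1) * unit_cube_indicator x) \<partial>M)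
      = (\<integral>\<^sup>+a. ennreal (\<phi> a * indicator {0..1} a) \<partial>lborel)"
proof -
  define h where "h i u = (if i = 1 then \<phi> u * indicator {0..1} u else indicator {0..1} u)"
    for i :: nat and u :: real
  have h_nonneg: "0 \<le> h i u" for i u
    using \<phi>_nonneg by (auto simp: h_def indicator_def)
  have ins: "{1..n} = insert 1 {2..n}" by auto
  have factor: "\<phi> (x 1) * unit_cube_indicator x = (\<Prod>i\<in>{1..n}. h i (x i))" for x :: "nat \<Rightarrow> real"
  proof -
    have "(\<Prod>i\<in>{2..n}. h i (x i)) = (\<Prod>i\<in>{2..n}. indicator {0..1} (x i))"
      by (intro prod.cong) (auto simp: h_def)
    then show ?thesis
      unfolding unit_cube_indicator_def ins by (simp add: h_def mult.assoc)
  qed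
  have "(\<integral>\<^sup>+x. ennreal (\<phi> (x 1) * unit_cube_indicator x) \<partial>M)
      = (\<integral>\<^sup>+x. (\<Prod>i\<in>{1..n}. ennreal (h i (x i))) \<partial>M)"
    unfolding factor by (intro nn_integral_cong prod_ennreal[symmetric] h_nonneg)
  also have "\<dots> = (\<Prod>i\<in>{1..n}. (\<integral>\<^sup>+a. ennreal (h i a) \<partial>lborel))"
    using \<phi>_meas by (intro lborel_product.product_nn_integral_prod)
      (auto intro!: measurable_compose[OF _ measurable_ennreal] simp: h_def)
  also have "\<dots> = (\<integral>\<^sup>+a. ennreal (h 1 a) \<partial>lborel) * (\<Prod>i\<in>{2..n}. (\<integral>\<^sup>+a. ennreal (h i a) \<partial>lborel))"
    unfolding ins by (subst prod.insert) auto
  also have "(\<Prod>i\<in>{2..n}. (\<integral>\<^sup>+a. ennreal (h i a) \<partial>lborel)) = 1"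
    by (intro prod.neutral ballI) (auto simp: h_def ennreal_indicator)
  finally show ?thesis by (simp add: h_def)
qed

lemma sawtooth_density_slice_le:
  "sawtooth_density n f g (x(n + 1 := s)) y \<le> density_bound
      * (unit_cube_indicator x * unit_cube_indicator y)"
proof -
  have "sawtooth_density n f g (x(n + 1 := s)) y \<le>
      density_bound * (unit_cube_indicator (x(n + 1 := s)) * unit_cube_indicator y)"
    unfolding density_bound_def unit_cube_indicator_def
    by (rule sawtooth_density_le) (simp_all add: f_nonneg g_nonneg f_le_f1 g_le_g1)
  also have "unit_cube_indicator (x(n + 1 := s)) = unit_cube_indicator x"
    unfolding unit_cube_indicator_def by (intro prod.cong) auto
  finally show ?thesis .
qed

lemma slice_le_density_bound:
  assumes \<phi>_meas: "\<phi> \<in> borel_measurable borel" and \<phi>_nonneg: "\<And>u. 0 \<le> \<phi> u"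
  shows "slice \<phi> s \<le> ennreal density_bound * (\<integral>\<^sup>+a. ennreal (\<phi> a * indicator {0..1} a) \<partial>lborel)"
proof -
  let ?P = unit_cube_indicator
  have \<phi>_first_meas: "(\<lambda>x. \<phi> (x 1)) \<in> borel_measurable M"
    by (intro measurable_compose[OF measurable_component_singleton[of 1 "{1..n}" "\<lambda>_. lborel"]
        \<phi>_meas[simplified measurable_lborel2[symmetric]]]) auto
  have P_mass: "(\<integral>\<^sup>+y. ennreal (?P y) \<partial>M) = 1"
    using nn_integral_first_component[of "\<lambda>_. 1"] by (simp add: ennreal_indicator)
  have "slice \<phi> s \<le>
      (\<integral>\<^sup>+xy. ennreal (density_bound * (\<phi> (fst xy 1) * ?P (fst xy)))
          * ennreal (?P (snd xy)) \<partial>(M \<Otimes>\<^sub>M M))"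
    unfolding slice_def
  proof (rule nn_integral_mono)
    fix xy :: "(nat \<Rightarrow> real) \<times> (nat \<Rightarrow> real)"
    have "\<phi> (fst xy 1) * sawtooth_density n f g ((fst xy)(n + 1 := s)) (snd xy) \<le>
        \<phi> (fst xy 1) * (density_bound * (?P (fst xy) * ?P (snd xy)))"
      by (rule mult_left_mono[OF sawtooth_density_slice_le \<phi>_nonneg])
    then show "ennreal (\<phi> (fst xy 1) * sawtooth_density n f g ((fst xy)(n + 1 := s)) (snd xy)) \<le>
        ennreal (density_bound * (\<phi> (fst xy 1) * ?P (fst xy))) * ennreal (?P (snd xy))"
      using unit_cube_indicator_nonneg
      by (subst ennreal_mult''[symmetric]) (auto intro!: ennreal_leI simp: algebra_simps)
  qed
  also have "\<dots> = (\<integral>\<^sup>+x. \<integral>\<^sup>+y. ennreal (density_bound * (\<phi> (x 1) * ?P x)) * ennreal (?P y) \<partial>M \<partial>M)"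
  proof -
    have "(\<lambda>xy. ennreal (density_bound * (\<phi> (fst xy 1) * ?P (fst xy))) * ennreal (?P (snd xy))) \<in>
        borel_measurable (M \<Otimes>\<^sub>M M)"
      using unit_cube_indicator_measurable \<phi>_first_meas
      by (intro borel_measurable_times_ennreal measurable_compose[OF _ measurable_ennreal]
          borel_measurable_times borel_measurable_const measurable_compose[OF measurable_fst]
          measurable_compose[OF measurable_snd])
    from sigma_finite_measure.nn_integral_fst[OF lborel_product.sigma_finite this] show ?thesis by simp
  qed
  also have "\<dots> = (\<integral>\<^sup>+x. ennreal (density_bound * (\<phi> (x 1) * ?P x)) \<partial>M)"
    by (intro nn_integral_cong) (simp only: nn_integral_cmult[OF measurable_compose[OF
          unit_cube_indicator_measurable measurable_ennreal]] P_mass mult_1_right)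
  also have "\<dots> = (\<integral>\<^sup>+x. ennreal density_bound * ennreal (\<phi> (x 1) * ?P x) \<partial>M)"
    using density_bound_nonneg \<phi>_nonneg unit_cube_indicator_nonneg
    by (intro nn_integral_cong ennreal_mult) auto
  also have "\<dots> = ennreal density_bound * (\<integral>\<^sup>+x. ennreal (\<phi> (x 1) * ?P x) \<partial>M)"
    using unit_cube_indicator_measurable \<phi>_first_meas
    by (intro nn_integral_cmult measurable_compose[OF _ measurable_ennreal] borel_measurable_times)
  also have "(\<integral>\<^sup>+x. ennreal (\<phi> (x 1) * ?P x) \<partial>M) = (\<integral>\<^sup>+a. ennreal (\<phi> a * indicator {0..1} a) \<partial>lborel)"
    by (rule nn_integral_first_component[OF \<phi>_meas \<phi>_nonneg])
  finally show ?thesis .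
qed

lemma slice_finite:
  assumes "\<phi> \<in> borel_measurable borel" "\<And>u. 0 \<le> \<phi> u" "\<And>u. \<phi> u \<le> 1"
  shows "slice \<phi> s < top"
proof -
  have "(\<integral>\<^sup>+a. ennreal (\<phi> a * indicator {0..1} a) \<partial>lborel)
      \<le> (\<integral>\<^sup>+(a::real). ennreal (indicator {0..1} a) \<partial>lborel)"
    using assms(3) by (intro nn_integral_mono ennreal_leI) (auto simp: indicator_def)
  also have "\<dots> = 1"
    by (simp add: ennreal_indicator)
  finally have "ennreal density_bound * (\<integral>\<^sup>+a. ennreal (\<phi> a * indicator {0..1} a) \<partial>lborel)
      \<le> ennreal density_bound"
    using mult_left_mono[of _ 1 "ennreal density_bound"] by simp
  then have "slice \<phi> s \<le> ennreal density_bound"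
    using slice_le_density_bound[OF assms(1,2), of s] by (rule order_trans[rotated])
  then show ?thesis
    using le_less_trans by fastforce
qed

lemma total_weight_finite: "total_weight < top"
proof -
  have "ennreal (1 / (64 * A\<^sup>2)) * total_weight < top"
    using slice_lower_bound[of 0] slice_finite[of "\<lambda>_. 1" 0] one_le_A by (auto intro: le_less_trans)
  then show ?thesis
    using one_le_A by (auto simp: ennreal_mult_less_top ennreal_mult_eq_top_iff top.not_eq_extremum)
qed

lemma slice_indicator_lipschitz:
  assumes "t1 \<le> t2"
  shows "\<bar>enn2real (slice (indicator {..t2}) s) - enn2real (slice (indicator {..t1}) s)\<bar> \<le>
    density_bound * (t2 - t1)"
proof -
  have split: "slice (indicator {..t2}) s = slice (indicator {..t1}) s + slice (indicator {t1<..t2}) s"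
  proof -
    have "slice (indicator {..t2}) s = (\<integral>\<^sup>+xy.
        ennreal (indicator {..t1} (fst xy 1) * sawtooth_density n f g ((fst xy)(n + 1 := s)) (snd xy)) +
        ennreal (indicator {t1<..t2} (fst xy 1)
            * sawtooth_density n f g ((fst xy)(n + 1 := s)) (snd xy)) \<partial>(M \<Otimes>\<^sub>M M))"
      unfolding slice_def using assms sawtooth_density_nonneg[OF f_nonneg g_nonneg]
      by (intro nn_integral_cong)
          (auto simp: indicator_def ennreal_plus[symmetric] simp del: ennreal_plus)
    also have "\<dots> = slice (indicator {..t1}) s + slice (indicator {t1<..t2}) s"
      unfolding slice_def
      by (intro nn_integral_add measurable_compose[OF _ measurable_ennreal]
          slice_integrand_measurable) auto
    finally show ?thesis .
  qed
  have "slice (indicator {t1<..t2}) s \<le> ennreal density_bound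
      * (\<integral>\<^sup>+a. ennreal (indicator {t1<..t2} a * indicator {0..1} a) \<partial>lborel)"
    by (intro slice_le_density_bound) auto
  also have "\<dots> \<le> ennreal density_bound * (\<integral>\<^sup>+a. indicator {t1<..t2} a \<partial>lborel)"
    by (intro mult_left_mono nn_integral_mono) (auto simp: indicator_def)
  also have "\<dots> = ennreal (density_bound * (t2 - t1))"
    using assms density_bound_nonneg by (simp add: ennreal_mult)
  finally have "enn2real (slice (indicator {t1<..t2}) s) \<le> density_bound * (t2 - t1)"
    using assms density_bound_nonneg by (auto simp: enn2real_leI)
  moreover have "enn2real (slice (indicator {..t2}) s) =
      enn2real (slice (indicator {..t1}) s) + enn2real (slice (indicator {t1<..t2}) s)"
    unfolding split by (intro enn2real_plus slice_finite; simp add: indicator_def)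
  ultimately show ?thesis by simp
qed

lemma cond_cdf_eq_slice:
  "cond_cdf_XI_given_XF n f g s t = enn2real (slice (indicator {..t}) s) / enn2real (slice (\<lambda>_. 1) s)"
proof -
  have "sawtooth_slice_integral n f g \<phi> s = enn2real (slice \<phi> s)"
    if "\<phi> \<in> borel_measurable borel" "\<And>u. 0 \<le> \<phi> u" for \<phi>
    unfolding sawtooth_slice_integral_def slice_def
    using that sawtooth_density_nonneg[OF f_nonneg g_nonneg]
    by (intro integral_eq_nn_integral slice_integrand_measurable) auto
  then show ?thesis
    unfolding cond_cdf_XI_given_XF_def by simp
qed

lemma cond_cdf_continuous: "continuous_on {0..1} (cond_cdf_XI_given_XF n f g s)"
proof -
  have "density_bound-lipschitz_on {0..1} (\<lambda>t. enn2real (slice (indicator {..t}) s))"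
  proof (rule lipschitz_onI)
    fix t1 t2 :: real
    show "dist (enn2real (slice (indicator {..t1}) s)) (enn2real (slice (indicator {..t2}) s)) \<le>
        density_bound * dist t1 t2"
      using slice_indicator_lipschitz[of t1 t2 s] slice_indicator_lipschitz[of t2 t1 s]
      by (cases "t1 \<le> t2") (auto simp: dist_real_def abs_minus_commute)
  qed (rule density_bound_nonneg)
  moreover have "cond_cdf_XI_given_XF n f g s =
      (\<lambda>t. enn2real (slice (indicator {..t}) s) * inverse (enn2real (slice (\<lambda>_. 1) s)))"
    by (simp add: fun_eq_iff cond_cdf_eq_slice divide_inverse)
  ultimately show ?thesis
    by (simp add: continuous_on_mult_right lipschitz_on_continuous_on)
qed

lemma cond_cdf_lipschitz:
  assumes s1: "s1 \<in> {0..1 / (4 * A)}" and s2: "s2 \<in> {0..1 / (4 * A)}"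
  shows "\<bar>cond_cdf_XI_given_XF n f g s1 t - cond_cdf_XI_given_XF n f g s2 t\<bar> \<le> 128 * A ^ 4 * \<bar>s1 - s2\<bar>"
proof -
  have "1 / (4 * A) \<le> 1"
    using one_le_A by (simp add: field_simps)
  then have s_unit: "s1 \<in> {0..1}" "s2 \<in> {0..1}"
    using s1 s2 by auto
  define T where "T = enn2real total_weight"
  define L where "L = A * A * \<bar>s1 - s2\<bar>"
  have diff_le: "\<bar>enn2real (slice \<phi> s1) - enn2real (slice \<phi> s2)\<bar> \<le> L * T"
    if "\<phi> \<in> borel_measurable borel" "\<And>u. 0 \<le> \<phi> u" "\<And>u. \<phi> u \<le> 1" for \<phi>
    using enn2real_le_add_cmult[OF slice_le_lipschitz[OF that s_unit] slice_finite[OF that]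
        total_weight_finite]
      enn2real_le_add_cmult[OF slice_le_lipschitz[OF that s_unit(2,1)] slice_finite[OF that]
          total_weight_finite]
    by (simp add: L_def T_def abs_minus_commute)
  have lower: "1 / (64 * A\<^sup>2) * T \<le> enn2real (slice (\<lambda>_. 1) s)" if "s \<in> {0..1 / (4 * A)}" for s
    using enn2real_mono[OF slice_lower_bound slice_finite[of "\<lambda>_. 1"]] that one_le_A
    by (simp add: T_def enn2real_mult)
  have num_le: "enn2real (slice (indicator {..t}) s) \<le> enn2real (slice (\<lambda>_. 1) s)" for s
    unfolding slice_def using sawtooth_density_nonneg[OF f_nonneg g_nonneg] slice_finite[of "\<lambda>_. 1" s]
    by (intro enn2real_mono nn_integral_mono ennreal_leI mult_right_mono)
        (auto simp: indicator_def slice_def)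
  have indicator_range: "indicator {..t} \<in> borel_measurable borel" "\<And>u. 0 \<le> (indicator {..t} u :: real)"
    "\<And>u. (indicator {..t} u :: real) \<le> 1"
    by (auto simp: indicator_def)
  have "\<bar>cond_cdf_XI_given_XF n f g s1 t - cond_cdf_XI_given_XF n f g s2 t\<bar> \<le> 2 * L / (1 / (64 * A\<^sup>2))"
    unfolding cond_cdf_eq_slice
  proof (rule ratio_difference_bound[where t = T])
    show "\<bar>enn2real (slice (indicator {..t}) s1) - enn2real (slice (indicator {..t}) s2)\<bar> \<le> L * T"
      by (rule diff_le[OF indicator_range])
    show "\<bar>enn2real (slice (\<lambda>_. 1) s1) - enn2real (slice (\<lambda>_. 1) s2)\<bar> \<le> L * T"
      by (rule diff_le) simp_all
  qed (use lower s1 s2 num_le one_le_A in \<open>auto simp: T_def L_def\<close>)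
  also have "\<dots> = 128 * A ^ 4 * \<bar>s1 - s2\<bar>"
    by (simp add: L_def power2_eq_square power4_eq_xxxx)
  finally show ?thesis .
qed

end

lemma sawtooth_density_cong:
  assumes "\<And>i u. i \<in> {1..n} \<Longrightarrow> u \<in> {0..1} \<Longrightarrow> f i u = f' i u \<and> g i u = g' i u"
  shows "sawtooth_density n f g x y = sawtooth_density n f' g' x y"
proof (cases "(\<forall>i\<in>{1..n + 1}. x i \<in> {0..1}) \<and> (\<forall>i\<in>{1..n}. y i \<in> {0..1})")
  case inside: True
  have "indicator {..y i} (x i) * indicator {..y i} (x (i + 1)) * f i (y i - x i)
      * g i (y i - x (i + 1)) =
      indicator {..y i} (x i) * indicator {..y i} (x (i + 1)) * f' i (y i - x i)
          * g' i (y i - x (i + 1))"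
    if i: "i \<in> {1..n}" for i
  proof (cases "x i \<le> y i \<and> x (i + 1) \<le> y i")
    case True
    moreover have "x i \<in> {0..1}" "x (i + 1) \<in> {0..1}" "y i \<in> {0..1}"
      using inside i by auto
    ultimately have "y i - x i \<in> {0..1}" "y i - x (i + 1) \<in> {0..1}"
      by auto
    then show ?thesis using assms[OF i] by simp
  qed (auto simp: indicator_def)
  then have "(\<Prod>i\<in>{1..n}. indicator {..y i} (x i) * indicator {..y i} (x (i + 1)) * f i (y i - x i) *
        g i (y i - x (i + 1))) =
      (\<Prod>i\<in>{1..n}. indicator {..y i} (x i) * indicator {..y i} (x (i + 1)) * f' i (y i - x i) *
        g' i (y i - x (i + 1)))"
    by (rule prod.cong[OF refl])
  then show ?thesis
    unfolding sawtooth_density_def by simp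
next
  case False
  then consider i where "i \<in> {1..n + 1}" "x i \<notin> {0..1}" | i where "i \<in> {1..n}" "y i \<notin> {0..1}"
    by blast
  then have "(\<Prod>i\<in>{1..n + 1}. indicator {0..1} (x i) :: real) = 0 \<or>
      (\<Prod>i\<in>{1..n}. indicator {0..1} (y i) :: real) = 0"
  proof cases
    case (1 i)
    then show ?thesis by (intro disjI1 prod_zero) (auto intro!: bexI[of _ i])
  next
    case (2 i)
    then show ?thesis by (intro disjI2 prod_zero) (auto intro!: bexI[of _ i])
  qed
  then show ?thesis
    unfolding sawtooth_density_def by auto
qed

lemma clamp_unit_real: "clamp 0 1 (u::real) = max 0 (min 1 u)"
  unfolding clamp_def Basis_real_def by simp

text \<open>The model only evaluates the weights at indices in 1..n and at arguments in [0,1]; outside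
  that range they are extended so as to meet the assumptions of regular_sawtooth.\<close>
definition unit_extension :: "nat \<Rightarrow> (nat \<Rightarrow> real \<Rightarrow> real) \<Rightarrow> nat \<Rightarrow> real \<Rightarrow> real" where
  "unit_extension n f i u = (if i \<in> {1..n} then f i (clamp 0 1 u) else 0)"

lemma unit_extension_eq: "i \<in> {1..n} \<Longrightarrow> u \<in> {0..1} \<Longrightarrow> unit_extension n f i u = f i u"
  by (simp add: unit_extension_def clamp_unit_real)

lemma unit_extension_regular:
  assumes "\<And>i. i \<in> {1..n} \<Longrightarrow> sawtooth_weight_fun (f i)"
  shows "continuous_on UNIV (unit_extension n f i) \<and> 0 \<le> unit_extension n f i u \<and>
    mono (unit_extension n f i) \<and> unit_extension n f i u \<le> unit_extension n f i 1"
proof (cases "i \<in> {1..n}")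
  case True
  have cont: "continuous_on {0..1} (f i)" and nonneg: "\<forall>x\<in>{0..1}. 0 \<le> f i x"
    and mono: "mono_on {0..1} (f i)"
    using assms[OF True]
    unfolding sawtooth_weight_fun_def C1_on_unit_def continuous_on_eq_continuous_within
    by (auto intro: DERIV_continuous)
  have range: "clamp 0 1 v \<in> {0..1}"
    and clamp_mono: "v \<le> w \<Longrightarrow> clamp 0 1 v \<le> clamp 0 1 w" for v w :: real
    by (auto simp: clamp_unit_real)
  have "continuous_on UNIV (\<lambda>u. f i (clamp 0 1 u))"
    using cont by (intro clamp_continuous_on) simp
  moreover have "mono (\<lambda>u. f i (clamp 0 1 u))"
    by (intro monoI mono_onD[OF mono] range clamp_mono)
  moreover have "f i (clamp 0 1 u) \<le> f i (clamp 0 1 1)"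
    by (intro mono_onD[OF mono] range) (simp add: clamp_unit_real)
  ultimately show ?thesis
    using True nonneg range by (simp add: unit_extension_def[abs_def])
qed (auto simp: unit_extension_def[abs_def] intro: monoI)

lemma regular_sawtooth_unit_extension:
  assumes "n = Suc (Suc k)"
    and weights: "\<forall>i\<in>{1..n}. sawtooth_weight_fun (f i) \<and> sawtooth_weight_fun (g i)"
    and mass: "integral {0..1} (f n) = 1" "integral {0..1} (g n) = 1"
    and bound: "\<forall>x\<in>{0..1}. f n x \<le> A" "\<forall>x\<in>{0..1}. g n x \<le> A" and "1 \<le> A"
  shows "regular_sawtooth k (unit_extension n f) (unit_extension n g) A"
proof -
  have n: "n \<in> {1..n}" using assms(1) by simp
  note f_props = unit_extension_regular[of n f] and g_props = unit_extension_regular[of n g]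
  have "unit_extension n f n u \<le> A" "unit_extension n g n u \<le> A" for u
    using n bound by (simp_all add: unit_extension_def clamp_unit_real)
  moreover have "integral {0..1} (unit_extension n h n) = integral {0..1} (h n)" for h
    by (rule Henstock_Kurzweil_Integration.integral_cong) (rule unit_extension_eq[OF n])
  ultimately show ?thesis
    unfolding assms(1) using f_props g_props weights mass \<open>1 \<le> A\<close> assms(1)
    by unfold_locales auto
qed

lemma cond_cdf_unit_extension:
  "cond_cdf_XI_given_XF n (unit_extension n f) (unit_extension n g) = cond_cdf_XI_given_XF n f g"
proof -
  have "sawtooth_density n (unit_extension n f) (unit_extension n g) = sawtooth_density n f g"
    by (intro ext sawtooth_density_cong) (simp add: unit_extension_eq)
  then show ?thesis
    unfolding cond_cdf_XI_given_XF_def sawtooth_slice_integral_def by simp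
qed

theorem mainTheorem12:
  fixes A :: real
  assumes "A > 0"
  shows "\<exists>R B. R \<ge> 1 \<and>
    (\<forall>n::nat. \<forall>f g :: nat \<Rightarrow> real \<Rightarrow> real.
      n \<ge> 2 \<and>
      (\<forall>i\<in>{1..n}. sawtooth_weight_fun (f i) \<and> sawtooth_weight_fun (g i)) \<and>
      (\<forall>h\<in>{f 1, g 1, f n, g n}. integral {0..1} h = 1 \<and> (\<forall>x\<in>{0..1}. \<bar>h x\<bar> \<le> A))
      \<longrightarrow>
      (\<forall>s\<in>{0..1/R}. continuous_on {0..1} (cond_cdf_XI_given_XF n f g s)) \<and>
      (\<forall>s1\<in>{0..1/R}. \<forall>s2\<in>{0..1/R}. \<forall>t\<in>{0..1}.
         \<bar>cond_cdf_XI_given_XF n f g s1 t - cond_cdf_XI_given_XF n f g s2 t\<bar> \<le> B * \<bar>s1 - s2\<bar>))"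
proof (rule exI[of _ "4 * max A 1"], rule exI[of _ "128 * max A 1 ^ 4"], intro conjI allI impI)
  show "1 \<le> 4 * max A 1" by simp
  fix n :: nat and f g :: "nat \<Rightarrow> real \<Rightarrow> real"
  assume hyps: "2 \<le> n \<and> (\<forall>i\<in>{1..n}. sawtooth_weight_fun (f i) \<and> sawtooth_weight_fun (g i)) \<and>
    (\<forall>h\<in>{f 1, g 1, f n, g n}. integral {0..1} h = 1 \<and> (\<forall>x\<in>{0..1}. \<bar>h x\<bar> \<le> A))"
  then obtain k where k: "n = Suc (Suc k)"
    by (metis add_2_eq_Suc le_Suc_ex)
  have "regular_sawtooth k (unit_extension n f) (unit_extension n g) (max A 1)"
    using hyps by (intro regular_sawtooth_unit_extension[OF k])
        (auto dest!: abs_le_D1 intro: le_max_iff_disj[THEN iffD2])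
  note model = this[unfolded k] and cdf_eq = cond_cdf_unit_extension[of n f g, unfolded k]
  show "\<forall>s\<in>{0..1 / (4 * max A 1)}. continuous_on {0..1} (cond_cdf_XI_given_XF n f g s)"
    using regular_sawtooth.cond_cdf_continuous[OF model] unfolding k cdf_eq by blast
  show "\<forall>s1\<in>{0..1 / (4 * max A 1)}. \<forall>s2\<in>{0..1 / (4 * max A 1)}. \<forall>t\<in>{0..1}.
      \<bar>cond_cdf_XI_given_XF n f g s1 t - cond_cdf_XI_given_XF n f g s2 t\<bar> \<le>
        128 * max A 1 ^ 4 * \<bar>s1 - s2\<bar>"
    using regular_sawtooth.cond_cdf_lipschitz[OF model] unfolding k cdf_eq by blast
qed

end
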